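(* Let $P=MN_P$ be a standard parabolic subgroup of $G$, $\pi\in\Pi_{\mathrm{disc}}(M)$, $Q\subset R$ standard parabolic subgroups and $w,w'\in{}_QW_P$ with $P_\pi\subset P_w\cap P_{w'}$. Then the map $$(\lambda,\lambda')\mapsto(\hat\theta_Q^R\theta_R)(w\lambda+w'\lambda'+w\nu^P_{P_w}+w'\nu^P_{P_{w'}})$$ does not vanish identically on $i\mathfrak a_P^{G,*}\times i\mathfrak a_P^{G,*}$.
   Context: $F$ is a number field, $G=\mathrm{GL}_n$ over $F$, $P_0$ the upper triangular Borel, $W\cong\mathfrak S_n$, $\mathfrak a_0=\mathbb R^n$ (identified with its dual via the standard inner product). For standard $Q\subset R$: $\Delta_Q^R$ the simple roots of $A_Q$ in $M_R\cap N_Q$, $\Delta_R^\vee$ the simple coroots of $R$, $\hat\Delta_Q^{R,\vee}\subset\mathfrak a_Q^R$ the basis dual to $\Delta_Q^R$ (simple coweights); $\theta_R(\mu)=\mathrm{vol}(\mathfrak a_R^G/\mathbb Z(\Delta_R^\vee))^{-1}\prod_{\alpha\in\Delta_R}\langle\mu,\alpha^\vee\rangle$ and $\hat\theta_Q^R(\mu)=\mathrm{vol}(\mathfrak a_Q^R/\mathbb Z(\hat\Delta_Q^{R,\vee}))^{-1}\prod_{\varpi^\vee\in\hat\Delta_Q^{R,\vee}}\langle\mu,\varpi^\vee\rangle$. ${}_QW_P$ is the set of $w\in W$ with $M_P\cap w^{-1}P_0w=M_P\cap P_0$ and $M_Q\cap wP_0w^{-1}=M_Q\cap P_0$; $P_w=(M_P\cap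 w^{-1}Qw)N_P$. $\Pi_{\mathrm{disc}}(M)$: discrete automorphic representations of $M(\mathbb A)$ with central character trivial on $A_M^\infty$. Write $M=\prod G_{n_i}$, $\pi=\boxtimes\pi_i$; by Moeglin–Waldspurger $n_i=r_id_i$ with $\pi_i$ the residual representation attached to $\sigma_i^{\otimes d_i}$, $\sigma_i$ cuspidal on $\mathrm{GL}_{r_i}$; $P_\pi\subset P$ is the standard parabolic with $P_\pi\cap M=\prod P_{\pi_i}$, $P_{\pi_i}$ standard in $\mathrm{GL}_{n_i}$ with Levi $\mathrm{GL}_{r_i}^{d_i}$. For $P_\pi\subset S\subset P$, $S\cap M=\prod S_i$, $\nu_S^P=(-\rho_{S_i}^{\mathrm{GL}_{n_i}}/r_i)_i\in\mathfrak a_S^{P,*}$. *)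

theory Defs
  imports "HOL-Analysis.Analysis" "HOL-Combinatorics.Permutations"
begin

text \<open>G = GL_n, coordinates indexed by 1..n. a_0 = R^n is modelled by
  functions nat => real supported on {1..n}; complexified duals by nat => complex.
  A standard parabolic subgroup is encoded by its set D of "cut points"
  D \<subseteq> {1..n-1}: the simple roots e_c - e_(c+1) of A_0 lying in its unipotent
  radical are exactly those with c \<in> D.  Thus Q \<subseteq> R iff cuts(R) \<subseteq> cuts(Q).
  The Weyl group W = S_n is the group of permutations of {1..n}, acting by
  w e_i = e_(w i).\<close>

fun psums :: "nat list \<Rightarrow> nat list" where
  "psums [] = []"
| "psums (x # xs) = x # map ((+) x) (psums xs)"

text \<open>cut set of the standard parabolic with block sizes ns (a composition of n)\<close>
definition cuts_of :: "nat list \<Rightarrow> nat set" where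
  "cuts_of ns = set (butlast (psums ns))"

text \<open>i and j lie in the same block of the standard Levi with cut set D\<close>
definition same_block :: "nat set \<Rightarrow> nat \<Rightarrow> nat \<Rightarrow> bool" where
  "same_block D i j = (\<forall>c\<in>D. \<not> (min i j \<le> c \<and> c < max i j))"

text \<open>Data of P and of pi: a list of pairs (r_i, d_i), the i-th block of M is
  GL_(n_i) with n_i = r_i d_i, and pi_i is the residual representation attached to
  sigma_i^(d_i), sigma_i cuspidal on GL_(r_i).\<close>
definition compP :: "(nat \<times> nat) list \<Rightarrow> nat list" where
  "compP rd = map (\<lambda>(r, d). r * d) rd"

definition compPpi :: "(nat \<times> nat) list \<Rightarrow> nat list" where
  "compPpi rd = concat (map (\<lambda>(r, d). replicate d r) rd)"

text \<open>r_i for the block containing coordinate j\<close>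
definition rcoord :: "(nat \<times> nat) list \<Rightarrow> nat \<Rightarrow> nat" where
  "rcoord rd j = concat (map (\<lambda>(r, d). replicate (r * d) r) rd) ! (j - 1)"

text \<open>w \<in> _Q W_P: M_P \<inter> w^-1 P_0 w = M_P \<inter> P_0 and M_Q \<inter> w P_0 w^-1 = M_Q \<inter> P_0,
  i.e. w maps positive roots of M_P to positive roots and w^-1 maps positive roots
  of M_Q to positive roots.\<close>
definition inQWP :: "nat \<Rightarrow> nat set \<Rightarrow> nat set \<Rightarrow> (nat \<Rightarrow> nat) \<Rightarrow> bool" where
  "inQWP n DQ DP w =
     (w permutes {1..n} \<and>
      (\<forall>i j. 1 \<le> i \<longrightarrow> i < j \<longrightarrow> j \<le> n \<longrightarrow> same_block DP i j \<longrightarrow> w i < w j) \<and>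
      (\<forall>i j. 1 \<le> i \<longrightarrow> i < j \<longrightarrow> j \<le> n \<longrightarrow> same_block DQ i j \<longrightarrow> inv w i < inv w j))"

text \<open>cut set of P_w = (M_P \<inter> w^-1 Q w) N_P: the simple root e_i - e_(i+1) lies in the
  Levi of P_w iff it lies in M_P and w(e_i - e_(i+1)) is a root of M_Q.\<close>
definition Pw_cuts :: "nat \<Rightarrow> nat set \<Rightarrow> nat set \<Rightarrow> (nat \<Rightarrow> nat) \<Rightarrow> nat set" where
  "Pw_cuts n DP DQ w =
     {i \<in> {1..<n}. i \<in> DP \<or> \<not> same_block DQ (w i) (w (Suc i))}"

text \<open>rho_(S \<inter> M)^M: half sum of the roots e_a - e_b (a<b) of M = M_P lying in N_S\<close>
definition rho :: "nat \<Rightarrow> nat set \<Rightarrow> nat set \<Rightarrow> nat \<Rightarrow> real" where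
  "rho n DP DS j =
     (real (card {b \<in> {1..n}. j < b \<and> same_block DP j b \<and> \<not> same_block DS j b})
      - real (card {a \<in> {1..n}. a < j \<and> same_block DP a j \<and> \<not> same_block DS a j})) / 2"

text \<open>nu_S^P = (- rho_(S_i)^(GL_(n_i)) / r_i)_i\<close>
definition nu :: "nat \<Rightarrow> (nat \<Rightarrow> nat) \<Rightarrow> nat set \<Rightarrow> nat set \<Rightarrow> nat \<Rightarrow> real" where
  "nu n rc DP DS j = (if j \<in> {1..n} then - rho n DP DS j / real (rc j) else 0)"

definition act :: "(nat \<Rightarrow> nat) \<Rightarrow> (nat \<Rightarrow> 'a) \<Rightarrow> nat \<Rightarrow> 'a" where
  "act w \<mu> = (\<lambda>j. \<mu> (inv w j))"

definition rpair :: "nat \<Rightarrow> (nat \<Rightarrow> real) \<Rightarrow> (nat \<Rightarrow> real) \<Rightarrow> real" where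
  "rpair n v u = (\<Sum>j = 1..n. v j * u j)"

definition cpair :: "nat \<Rightarrow> (nat \<Rightarrow> complex) \<Rightarrow> (nat \<Rightarrow> real) \<Rightarrow> complex" where
  "cpair n \<mu> v = (\<Sum>j = 1..n. \<mu> j * complex_of_real (v j))"

text \<open>simple root e_c - e_(c+1) of A_0 (= its coroot under the identification)\<close>
definition alpha :: "nat \<Rightarrow> nat \<Rightarrow> real" where
  "alpha c = (\<lambda>k. if k = c then 1 else if k = Suc c then -1 else 0)"

text \<open>orthogonal projection of a_0 onto a_S (average over blocks)\<close>
definition proj :: "nat \<Rightarrow> nat set \<Rightarrow> (nat \<Rightarrow> real) \<Rightarrow> nat \<Rightarrow> real" where
  "proj n D v = (\<lambda>k. if k \<in> {1..n}
      then (\<Sum>l \<in> {l \<in> {1..n}. same_block D k l}. v l) / real (card {l \<in> {1..n}. same_block D k l})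
      else 0)"

text \<open>v \<in> a_S\<close>
definition in_a :: "nat \<Rightarrow> nat set \<Rightarrow> (nat \<Rightarrow> real) \<Rightarrow> bool" where
  "in_a n D v = ((\<forall>k. k \<notin> {1..n} \<longrightarrow> v k = 0) \<and>
     (\<forall>k l. k \<in> {1..n} \<longrightarrow> l \<in> {1..n} \<longrightarrow> same_block D k l \<longrightarrow> v k = v l))"

text \<open>v \<in> a_Q^R (kernel of a_Q -> a_R)\<close>
definition in_aQR :: "nat \<Rightarrow> nat set \<Rightarrow> nat set \<Rightarrow> (nat \<Rightarrow> real) \<Rightarrow> bool" where
  "in_aQR n DQ DR v = (in_a n DQ v \<and>
     (\<forall>k \<in> {1..n}. (\<Sum>l \<in> {l \<in> {1..n}. same_block DR k l}. v l) = 0))"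

text \<open>v \<in> a_S^G\<close>
definition in_aG :: "nat \<Rightarrow> nat set \<Rightarrow> (nat \<Rightarrow> real) \<Rightarrow> bool" where
  "in_aG n D v = (in_a n D v \<and> (\<Sum>l = 1..n. v l) = 0)"

text \<open>\<lambda> \<in> i a_S^(G,*)\<close>
definition in_iaG :: "nat \<Rightarrow> nat set \<Rightarrow> (nat \<Rightarrow> complex) \<Rightarrow> bool" where
  "in_iaG n D lam = (\<exists>x. in_aG n D x \<and> lam = (\<lambda>j. \<i> * complex_of_real (x j)))"

text \<open>Gram determinant of the family (f i)_(i \<in> S), and covolume of the lattice it
  spans in its real span (w.r.t. the measure induced by the standard inner product)\<close>
definition gram_det :: "nat \<Rightarrow> nat set \<Rightarrow> (nat \<Rightarrow> nat \<Rightarrow> real) \<Rightarrow> real" where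
  "gram_det n S f = (\<Sum>p \<in> {p. p permutes S}. real_of_int (sign p) * (\<Prod>i\<in>S. rpair n (f i) (f (p i))))"

definition covol :: "nat \<Rightarrow> nat set \<Rightarrow> (nat \<Rightarrow> nat \<Rightarrow> real) \<Rightarrow> real" where
  "covol n S f = sqrt (gram_det n S f)"

text \<open>Delta_R^vee: coroot attached to the simple root of A_R indexed by c \<in> cuts(R)\<close>
definition coroot :: "nat \<Rightarrow> nat set \<Rightarrow> nat \<Rightarrow> nat \<Rightarrow> real" where
  "coroot n DR c = proj n DR (alpha c)"

definition theta :: "nat \<Rightarrow> nat set \<Rightarrow> (nat \<Rightarrow> complex) \<Rightarrow> complex" where
  "theta n DR \<mu> = complex_of_real (1 / covol n DR (coroot n DR)) *
     (\<Prod>c\<in>DR. cpair n \<mu> (coroot n DR c))"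

text \<open>hat Delta_Q^(R,vee): basis of a_Q^R dual to Delta_Q^R\<close>
definition coweight :: "nat \<Rightarrow> nat set \<Rightarrow> nat set \<Rightarrow> nat \<Rightarrow> nat \<Rightarrow> real" where
  "coweight n DQ DR c = (THE v. in_aQR n DQ DR v \<and>
      (\<forall>d \<in> DQ - DR. rpair n (alpha d) v = (if d = c then 1 else 0)))"

definition theta_hat :: "nat \<Rightarrow> nat set \<Rightarrow> nat set \<Rightarrow> (nat \<Rightarrow> complex) \<Rightarrow> complex" where
  "theta_hat n DQ DR \<mu> = complex_of_real (1 / covol n (DQ - DR) (coweight n DQ DR)) *
     (\<Prod>c\<in>DQ - DR. cpair n \<mu> (coweight n DQ DR c))"

end

theory Submission
  imports Defs "Jordan_Normal_Form.Determinant"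
begin

text \<open>Every factor of \<open>theta_hat_Q^R theta_R\<close> at \<open>mu\<close> is a nonzero constant (a Gram
  determinant of a family admitting a dual family) or a pairing \<open><mu, u>\<close>, where \<open>u\<close> is a
  coweight of \<open>a_Q^R\<close> or a projected coroot of \<open>R\<close>. Each such \<open>u\<close> lies in \<open>a_Q\<close>, has
  trace zero, and is \<open>\<ge> 0\<close> up to some index \<open>c\<close> and \<open>\<le> 0\<close> after it.

  The imaginary part of \<open><mu, u>\<close> is a linear form in \<open>(lam, lam')\<close>; a generic choice makes
  it nonzero unless the form vanishes identically. In that case \<open>u \<circ> w\<close> sums to zero over
  each block of \<open>P\<close>, and summation by parts writes \<open><w nu, u> = - \<Sum>k. rho_k u (w k) / r_k\<close>
  as minus a positive combination of the prefix sums of \<open>u \<circ> w\<close> along the blocks of \<open>P\<close>.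
  These are nonnegative since \<open>w\<close> is increasing on the blocks and \<open>u\<close> changes sign once,
  and one of them is positive. Hence the real part of \<open><mu, u>\<close> is negative.\<close>

section \<open>Blocks of standard Levi subgroups\<close>

lemma same_block_refl [simp]: "same_block D i i"
  unfolding same_block_def by auto

lemma same_block_sym: "same_block D i j \<longleftrightarrow> same_block D j i"
  unfolding same_block_def by (auto simp: min.commute max.commute)

lemma same_block_trans: "same_block D i j \<Longrightarrow> same_block D j k \<Longrightarrow> same_block D i k"
  unfolding same_block_def
proof (intro ballI notI)
  fix c assume ij: "\<forall>c\<in>D. \<not> (min i j \<le> c \<and> c < max i j)"
    and jk: "\<forall>c\<in>D. \<not> (min j k \<le> c \<and> c < max j k)"
    and c: "c \<in> D" "min i k \<le> c \<and> c < max i k"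
  from ij jk c(1) have "\<not> (min i j \<le> c \<and> c < max i j)" "\<not> (min j k \<le> c \<and> c < max j k)"
    by blast+
  then show False using c(2) unfolding min_def max_def by (auto split: if_splits)
qed

lemma same_block_Suc_iff: "same_block D i (Suc i) \<longleftrightarrow> i \<notin> D"
  unfolding same_block_def by (auto simp: less_Suc_eq_le)

lemma same_block_antimono: "D \<subseteq> D' \<Longrightarrow> same_block D' i j \<Longrightarrow> same_block D i j"
  unfolding same_block_def by auto

lemma same_block_same_side: "same_block D k l \<Longrightarrow> c \<in> D \<Longrightarrow> k \<le> c \<longleftrightarrow> l \<le> c"
  unfolding same_block_def by (auto simp: min_def max_def split: if_splits)

lemma same_block_step_const:
  assumes "same_block D a b" "a \<le> b"
    and step: "\<And>i. a \<le> i \<Longrightarrow> i < b \<Longrightarrow> i \<notin> D \<Longrightarrow> g i = g (Suc i)"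
  shows "g a = g b"
  using \<open>a \<le> b\<close>
proof (induction b rule: dec_induct)
  case (step i)
  then have "i \<notin> D" using assms(1,2) unfolding same_block_def by auto
  with step.hyps step.IH show ?case using assms(3) by simp
qed simp

abbreviation block :: "nat \<Rightarrow> nat set \<Rightarrow> nat \<Rightarrow> nat set" where
  "block n D k \<equiv> {l \<in> {1..n}. same_block D k l}"

lemma block_eq: "same_block D k l \<Longrightarrow> block n D k = block n D l"
  using same_block_trans same_block_sym by blast

lemma card_block_pos: "k \<in> {1..n} \<Longrightarrow> 0 < card (block n D k)"
  by (subst card_gt_0_iff) auto

lemma nth_concat_replicate_eq:
  assumes "\<forall>(m, y) \<in> set L. 0 < m"
    and "a < sum_list (map fst L)" "b < sum_list (map fst L)"
    and "\<forall>c \<in> set (butlast (psums (map fst L))). \<not> (min a b < c \<and> c \<le> max a b)"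
  shows "concat (map (\<lambda>(m, y). replicate m y) L) ! a = concat (map (\<lambda>(m, y). replicate m y) L) ! b"
  using assms
proof (induction L arbitrary: a b)
  case (Cons my L)
  obtain m y where my: "my = (m, y)" by (cases my)
  have cat: "concat (map (\<lambda>(m, y). replicate m y) (my # L))
      = replicate m y @ concat (map (\<lambda>(m, y). replicate m y) L)"
    using my by simp
  show ?case
  proof (cases "L = []")
    case True
    then show ?thesis using Cons.prems my by (simp add: nth_append)
  next
    case False
    then have "psums (map fst L) \<noteq> []" by (cases L) auto
    then have bl: "butlast (psums (map fst (my # L))) = m # map ((+) m) (butlast (psums (map fst L)))"
      using my by (simp add: map_butlast)
    have m_not_between: "\<not> (min a b < m \<and> m \<le> max a b)" using Cons.prems(4) unfolding bl by auto
    show ?thesis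
    proof (cases "a < m")
      case True
      then have "b < m" using m_not_between by (auto simp: min_def max_def split: if_splits)
      then show ?thesis using True unfolding cat by (simp add: nth_append)
    next
      case False
      then have "\<not> b < m" using m_not_between by (auto simp: min_def max_def split: if_splits)
      have "concat (map (\<lambda>(m, y). replicate m y) L) ! (a - m) = concat (map (\<lambda>(m, y). replicate m y) L) ! (b - m)"
      proof (rule Cons.IH)
        show "\<forall>(m, y)\<in>set L. 0 < m" using Cons.prems(1) by auto
        show "a - m < sum_list (map fst L)" "b - m < sum_list (map fst L)"
          using Cons.prems(2,3) my False \<open>\<not> b < m\<close> by auto
        show "\<forall>c\<in>set (butlast (psums (map fst L))). \<not> (min (a - m) (b - m) < c \<and> c \<le> max (a - m) (b - m))"
          using Cons.prems(4) False \<open>\<not> b < m\<close> unfolding bl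
          by (auto simp: min_def max_def add.commute split: if_splits)
      qed
      then show ?thesis using False \<open>\<not> b < m\<close> unfolding cat by (simp add: nth_append)
    qed
  qed
qed simp

lemma rcoord_eq_concat_replicate:
  "rcoord rd j = concat (map (\<lambda>(m, y). replicate m y) (map (\<lambda>(r, d). (r * d, r)) rd)) ! (j - 1)"
proof -
  have "concat (map (\<lambda>(r, d). replicate (r * d) r) rd)
      = concat (map (\<lambda>(m, y). replicate m y) (map (\<lambda>(r, d). (r * d, r)) rd))"
    by (induction rd) auto
  then show ?thesis unfolding rcoord_def by simp
qed

lemma sum_list_compP: "sum_list (map fst (map (\<lambda>(r, d). (r * d, r)) rd)) = sum_list (compP rd)"
  unfolding compP_def by (induction rd) auto

lemma rcoord_pos:
  assumes "\<forall>(r, d) \<in> set rd. 0 < r \<and> 0 < d" and "a \<in> {1..sum_list (compP rd)}"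
  shows "0 < rcoord rd a"
proof -
  let ?xs = "concat (map (\<lambda>(r, d). replicate (r * d) r) rd)"
  have "length ?xs = sum_list (compP rd)"
    unfolding compP_def by (induction rd) auto
  then have "?xs ! (a - 1) \<in> set ?xs" using assms(2) by (intro nth_mem) auto
  then show ?thesis using assms(1) unfolding rcoord_def by (auto split: if_splits)
qed

lemma rcoord_eq_if_same_block:
  assumes "\<forall>(r, d) \<in> set rd. 0 < r \<and> 0 < d"
    and "a \<in> {1..sum_list (compP rd)}" "b \<in> {1..sum_list (compP rd)}"
    and "same_block (cuts_of (compP rd)) a b"
  shows "rcoord rd a = rcoord rd b"
  unfolding rcoord_eq_concat_replicate
proof (rule nth_concat_replicate_eq)
  show "\<forall>(m, y) \<in> set (map (\<lambda>(r, d). (r * d, r)) rd). 0 < m" using assms(1) by auto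
  show "a - 1 < sum_list (map fst (map (\<lambda>(r, d). (r * d, r)) rd))"
    "b - 1 < sum_list (map fst (map (\<lambda>(r, d). (r * d, r)) rd))"
    using assms(2,3) unfolding sum_list_compP by auto
  have "map fst (map (\<lambda>(r, d). (r * d, r)) rd) = compP rd"
    unfolding compP_def by auto
  then show "\<forall>c \<in> set (butlast (psums (map fst (map (\<lambda>(r, d). (r * d, r)) rd)))).
      \<not> (min (a - 1) (b - 1) < c \<and> c \<le> max (a - 1) (b - 1))"
    using assms(2-4) unfolding same_block_def cuts_of_def by (auto simp: min_def max_def split: if_splits)
qed

section \<open>Coweights\<close>

lemma rpair_alpha: "1 \<le> d \<Longrightarrow> d < n \<Longrightarrow> rpair n (alpha d) u = u d - u (Suc d)"
proof -
  assume d: "1 \<le> d" "d < n"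
  have "rpair n (alpha d) u = (\<Sum>j = 1..n. (if j = d then u d else 0) - (if j = Suc d then u (Suc d) else 0))"
    unfolding rpair_def alpha_def by (rule sum.cong) auto
  also have "\<dots> = u d - u (Suc d)" using d by (simp add: sum_subtractf)
  finally show ?thesis .
qed

definition cut_below :: "nat set \<Rightarrow> nat \<Rightarrow> nat" where
  "cut_below D c = Max (insert 0 {d \<in> D. d < c})"

definition cut_above :: "nat \<Rightarrow> nat set \<Rightarrow> nat \<Rightarrow> nat" where
  "cut_above n D c = Min (insert n {d \<in> D. c < d})"

text \<open>For \<open>c \<notin> D\<close>, the block of \<open>D\<close> through \<open>c\<close> and \<open>c + 1\<close> is
  \<open>{cut_below D c <.. cut_above n D c}\<close>, and \<open>fund_coweight n D c\<close> is the fundamental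
  coweight at \<open>c\<close> of the corresponding \<open>GL\<close>-block, of trace zero and extended by zero.\<close>

definition fund_coweight :: "nat \<Rightarrow> nat set \<Rightarrow> nat \<Rightarrow> nat \<Rightarrow> real" where
  "fund_coweight n D c k =
     (if cut_below D c < k \<and> k \<le> c
      then real (cut_above n D c - c) / real (cut_above n D c - cut_below D c)
      else if c < k \<and> k \<le> cut_above n D c
      then - (real (c - cut_below D c) / real (cut_above n D c - cut_below D c))
      else 0)"

lemma cut_below_props:
  assumes "finite D" "1 \<le> c"
  shows "cut_below D c < c" "cut_below D c = 0 \<or> cut_below D c \<in> D"
    "\<And>d. d \<in> D \<Longrightarrow> d < c \<Longrightarrow> d \<le> cut_below D c"
proof -
  have fin: "finite (insert 0 {d \<in> D. d < c})" using assms(1) by simp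
  have "cut_below D c \<in> insert 0 {d \<in> D. d < c}" unfolding cut_below_def using Max_in[OF fin] by blast
  then show "cut_below D c < c" "cut_below D c = 0 \<or> cut_below D c \<in> D" using assms(2) by auto
  show "\<And>d. d \<in> D \<Longrightarrow> d < c \<Longrightarrow> d \<le> cut_below D c" unfolding cut_below_def using fin by (intro Max_ge) auto
qed

lemma cut_above_props:
  assumes "finite D" "c < n"
  shows "c < cut_above n D c" "cut_above n D c \<le> n" "cut_above n D c = n \<or> cut_above n D c \<in> D"
    "\<And>d. d \<in> D \<Longrightarrow> c < d \<Longrightarrow> cut_above n D c \<le> d"
proof -
  have fin: "finite (insert n {d \<in> D. c < d})" using assms(1) by simp
  have "cut_above n D c \<in> insert n {d \<in> D. c < d}" unfolding cut_above_def using Min_in[OF fin] by blast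
  then show "c < cut_above n D c" "cut_above n D c = n \<or> cut_above n D c \<in> D" using assms(2) by auto
  show "cut_above n D c \<le> n" "\<And>d. d \<in> D \<Longrightarrow> c < d \<Longrightarrow> cut_above n D c \<le> d"
    unfolding cut_above_def using fin by (auto intro: Min_le)
qed

lemma same_block_iff_between_cuts:
  assumes D: "D \<subseteq> {1..<n}" and c: "1 \<le> c" "c < n" "c \<notin> D"
    and k: "k \<in> {1..n}" "cut_below D c < k" "k \<le> cut_above n D c" and l: "l \<in> {1..n}"
  shows "same_block D k l \<longleftrightarrow> cut_below D c < l \<and> l \<le> cut_above n D c"
proof -
  have "finite D" using D finite_subset by blast
  note below = cut_below_props[OF this c(1)] and above = cut_above_props[OF this c(2)]
  show ?thesis
  proof
    assume kl: "same_block D k l"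
    have "cut_below D c < l"
      using below(2) same_block_same_side[OF kl] k l by (cases "cut_below D c = 0") fastforce+
    moreover have "l \<le> cut_above n D c"
      using above(3) same_block_same_side[OF kl] k l by (cases "cut_above n D c = n") fastforce+
    ultimately show "cut_below D c < l \<and> l \<le> cut_above n D c" by simp
  next
    assume l_between: "cut_below D c < l \<and> l \<le> cut_above n D c"
    show "same_block D k l" unfolding same_block_def
    proof (intro ballI notI)
      fix x assume x: "x \<in> D" "min k l \<le> x \<and> x < max k l"
      then have "cut_below D c < x" "x < cut_above n D c"
        using k l_between by (auto simp: min_def max_def split: if_splits)
      then show False using below(3)[OF x(1)] above(4)[OF x(1)] c(3) x(1) by (cases x c rule: linorder_cases) auto
    qed
  qed
qed

lemma fund_coweight_in_a:
  assumes "DQ \<subseteq> {1..<n}" and "DR \<subseteq> DQ" and c: "c \<in> DQ" "c \<notin> DR"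
  shows "in_a n DQ (fund_coweight n DR c)"
proof -
  have c1: "1 \<le> c" "c < n" using assms by auto
  have "finite DR" using assms finite_subset by (metis finite_atLeastLessThan)
  note below = cut_below_props[OF this c1(1)] and above = cut_above_props[OF this c1(2)]
  show ?thesis unfolding in_a_def
  proof (intro conjI allI impI)
    fix k assume "k \<notin> {1..n}"
    then show "fund_coweight n DR c k = 0" unfolding fund_coweight_def using above(2) by auto
  next
    fix k l assume k: "k \<in> {1..n}" and l: "l \<in> {1..n}" and kl: "same_block DQ k l"
    have "cut_below DR c < k \<longleftrightarrow> cut_below DR c < l"
      using below(2) same_block_same_side[OF kl, of "cut_below DR c"] k l \<open>DR \<subseteq> DQ\<close>
      by (cases "cut_below DR c = 0") auto
    moreover have "k \<le> cut_above n DR c \<longleftrightarrow> l \<le> cut_above n DR c"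
      using above(3) same_block_same_side[OF kl] k l \<open>DR \<subseteq> DQ\<close>
      by (cases "cut_above n DR c = n") auto
    moreover have "k \<le> c \<longleftrightarrow> l \<le> c" using same_block_same_side[OF kl c(1)] .
    ultimately show "fund_coweight n DR c k = fund_coweight n DR c l"
      unfolding fund_coweight_def by (simp add: not_le[symmetric])
  qed
qed

lemma sum_fund_coweight_between_cuts:
  assumes "finite D" "1 \<le> c" "c < n"
  shows "(\<Sum>l \<in> {Suc (cut_below D c)..cut_above n D c}. fund_coweight n D c l) = 0"
proof -
  define s e where "s = cut_below D c" and "e = cut_above n D c"
  have "s < c" "c < e" using cut_below_props[OF assms(1,2)] cut_above_props[OF assms(1,3)]
    unfolding s_def e_def by auto
  then have "{Suc s..e} = {Suc s..c} \<union> {Suc c..e}" by auto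
  then have "(\<Sum>l \<in> {Suc s..e}. fund_coweight n D c l)
      = (\<Sum>l \<in> {Suc s..c}. fund_coweight n D c l) + (\<Sum>l \<in> {Suc c..e}. fund_coweight n D c l)"
    by (simp add: sum.union_disjoint)
  also have "\<dots> = (\<Sum>l \<in> {Suc s..c}. real (e - c) / real (e - s)) + (\<Sum>l \<in> {Suc c..e}. - (real (c - s) / real (e - s)))"
    by (intro arg_cong2[where f = "(+)"] sum.cong) (auto simp: fund_coweight_def s_def e_def)
  also have "\<dots> = 0" using \<open>s < c\<close> \<open>c < e\<close> by simp
  finally show ?thesis unfolding s_def e_def .
qed

lemma fund_coweight_block_sum:
  assumes DQ: "DQ \<subseteq> {1..<n}" and DR: "DR \<subseteq> DQ" and c: "c \<in> DQ" "c \<notin> DR" and k: "k \<in> {1..n}"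
  shows "(\<Sum>l \<in> block n DR k. fund_coweight n DR c l) = 0"
proof -
  have c1: "1 \<le> c" "c < n" using DQ c by auto
  have DR': "DR \<subseteq> {1..<n}" using DQ DR by auto
  then have "finite DR" using finite_subset by blast
  note above = cut_above_props[OF this c1(2)]
  note between = same_block_iff_between_cuts[OF DR' c1 c(2)]
  show ?thesis
  proof (cases "cut_below DR c < k \<and> k \<le> cut_above n DR c")
    case True
    then have "block n DR k = {Suc (cut_below DR c)..cut_above n DR c}"
      using between[OF k] above(2) by auto
    then show ?thesis using sum_fund_coweight_between_cuts[OF \<open>finite DR\<close> c1] by simp
  next
    case False
    have "fund_coweight n DR c l = 0" if l: "l \<in> block n DR k" for l
    proof -
      have "\<not> (cut_below DR c < l \<and> l \<le> cut_above n DR c)"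
        using between[of l k] False l k by (auto simp: same_block_sym)
      then show ?thesis unfolding fund_coweight_def using above(1) by auto
    qed
    then show ?thesis by simp
  qed
qed

lemma sum_fund_coweight:
  assumes "finite D" "1 \<le> c" "c < n"
  shows "(\<Sum>l = 1..n. fund_coweight n D c l) = 0"
proof -
  note above = cut_above_props[OF assms(1,3)]
  have "(\<Sum>l = 1..n. fund_coweight n D c l) = (\<Sum>l \<in> {Suc (cut_below D c)..cut_above n D c}. fund_coweight n D c l)"
    using above(1,2) by (intro sum.mono_neutral_right) (auto simp: fund_coweight_def)
  then show ?thesis using sum_fund_coweight_between_cuts[OF assms] by simp
qed

lemma fund_coweight_sign:
  assumes "finite D" "1 \<le> c" "c < n"
  shows "k \<le> c \<Longrightarrow> 0 \<le> fund_coweight n D c k" "c < k \<Longrightarrow> fund_coweight n D c k \<le> 0"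
    "0 < fund_coweight n D c c"
  using cut_below_props(1)[OF assms(1,2)] cut_above_props(1)[OF assms(1,3)]
  unfolding fund_coweight_def by auto

lemma rpair_alpha_fund_coweight:
  assumes DQ: "DQ \<subseteq> {1..<n}" and DR: "DR \<subseteq> DQ" and c: "c \<in> DQ" "c \<notin> DR"
    and d: "d \<in> DQ" "d \<notin> DR"
  shows "rpair n (alpha d) (fund_coweight n DR c) = (if d = c then 1 else 0)"
proof -
  have c1: "1 \<le> c" "c < n" and d1: "1 \<le> d" "d < n" using DQ c d by auto
  have "finite DR" using DQ DR finite_subset by (metis finite_atLeastLessThan)
  note below = cut_below_props[OF this c1(1)] and above = cut_above_props[OF this c1(2)]
  show ?thesis
  proof (cases "d = c")
    case True
    define s e where "s = cut_below DR c" and "e = cut_above n DR c"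
    have "s < c" "c < e" using below(1) above(1) unfolding s_def e_def by auto
    have "rpair n (alpha d) (fund_coweight n DR c) = real (e - c) / real (e - s) + real (c - s) / real (e - s)"
      using True \<open>s < c\<close> \<open>c < e\<close> by (simp add: rpair_alpha[OF c1] fund_coweight_def s_def e_def)
    also have "\<dots> = (real (e - c) + real (c - s)) / real (e - s)" by (rule add_divide_distrib[symmetric])
    also have "real (e - c) + real (c - s) = real (e - s)" using \<open>s < c\<close> \<open>c < e\<close> by simp
    finally show ?thesis using True \<open>s < c\<close> \<open>c < e\<close> by simp
  next
    case False
    have "d \<noteq> cut_below DR c" "d \<noteq> cut_above n DR c" using below(2) above(3) d d1 by auto
    then have "fund_coweight n DR c d = fund_coweight n DR c (Suc d)"
      unfolding fund_coweight_def using False by (auto simp: less_Suc_eq_le le_eq_less_or_eq)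
    then show ?thesis using False by (simp add: rpair_alpha[OF d1])
  qed
qed

lemma in_a_lincomb:
  assumes "in_a n D u" "in_a n D v"
  shows "in_a n D (\<lambda>k. u k + s * v k)"
  unfolding in_a_def
proof (intro conjI allI impI)
  fix k assume "k \<notin> {1..n}"
  then have "u k = 0" "v k = 0" using assms unfolding in_a_def by blast+
  then show "u k + s * v k = 0" by simp
next
  fix k l assume "k \<in> {1..n}" "l \<in> {1..n}" "same_block D k l"
  then have "u k = u l" "v k = v l" using assms unfolding in_a_def by blast+
  then show "u k + s * v k = u l + s * v l" by simp
qed

lemma in_aQR_diff:
  assumes "in_aQR n DQ DR u" "in_aQR n DQ DR v"
  shows "in_aQR n DQ DR (\<lambda>k. u k - v k)"
proof -
  have "in_a n DQ (\<lambda>k. u k + (- 1) * v k)" using assms in_a_lincomb unfolding in_aQR_def by blast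
  moreover have "(\<Sum>l \<in> block n DR k. u l - v l) = 0" if "k \<in> {1..n}" for k
    using assms that unfolding in_aQR_def by (simp add: sum_subtractf)
  ultimately show ?thesis unfolding in_aQR_def by simp
qed

lemma in_aQR_eq_0:
  assumes u: "in_aQR n DQ DR u" and steps: "\<forall>d \<in> DQ - DR. u d = u (Suc d)"
  shows "u k = 0"
proof (cases "k \<in> {1..n}")
  case False
  then show ?thesis using u unfolding in_aQR_def in_a_def by blast
next
  case True
  have ua: "in_a n DQ u" using u unfolding in_aQR_def by simp
  have step: "u i = u (Suc i)" if "1 \<le> i" "i < n" "i \<notin> DR" for i
  proof (cases "i \<in> DQ")
    case True then show ?thesis using steps that by auto
  next
    case False
    then have "same_block DQ i (Suc i)" using same_block_Suc_iff by blast
    moreover have "i \<in> {1..n}" "Suc i \<in> {1..n}" using that by auto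
    ultimately show ?thesis using ua unfolding in_a_def by blast
  qed
  have const: "u k = u l" if "k \<in> {1..n}" "l \<in> {1..n}" "same_block DR k l" "k \<le> l" for k l
    using that by (rule_tac same_block_step_const[where D = DR]) (auto intro: step)
  have "u l = u k" if l: "l \<in> block n DR k" for l
  proof (cases "k \<le> l")
    case True
    then show ?thesis using const[of k l] \<open>k \<in> {1..n}\<close> l by simp
  next
    case False
    then show ?thesis using const[of l k] \<open>k \<in> {1..n}\<close> l by (simp add: same_block_sym)
  qed
  then have "(\<Sum>l \<in> block n DR k. u l) = (\<Sum>l \<in> block n DR k. u k)" by (rule sum.cong[OF refl])
  then have "real (card (block n DR k)) * u k = 0" using u True unfolding in_aQR_def by simp
  moreover have "card (block n DR k) \<noteq> 0" using card_block_pos[OF True, of DR] by linarith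
  ultimately show ?thesis by (simp only: mult_eq_0_iff of_nat_eq_0_iff) blast
qed

lemma coweight_eq:
  assumes "DQ \<subseteq> {1..<n}" and "DR \<subseteq> DQ" and "c \<in> DQ" "c \<notin> DR"
  shows "coweight n DQ DR c = fund_coweight n DR c"
  unfolding coweight_def
proof (rule the_equality)
  have "in_aQR n DQ DR (fund_coweight n DR c)"
    unfolding in_aQR_def using fund_coweight_in_a[OF assms] fund_coweight_block_sum[OF assms] by blast
  then show fund: "in_aQR n DQ DR (fund_coweight n DR c) \<and>
      (\<forall>d \<in> DQ - DR. rpair n (alpha d) (fund_coweight n DR c) = (if d = c then 1 else 0))"
    using rpair_alpha_fund_coweight[OF assms] by blast
  fix v assume v: "in_aQR n DQ DR v \<and> (\<forall>d \<in> DQ - DR. rpair n (alpha d) v = (if d = c then 1 else 0))"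
  have "v d - fund_coweight n DR c d = v (Suc d) - fund_coweight n DR c (Suc d)" if d: "d \<in> DQ - DR" for d
  proof -
    have "1 \<le> d" "d < n" using d assms(1) by auto
    moreover have "rpair n (alpha d) v = rpair n (alpha d) (fund_coweight n DR c)" using v fund d by simp
    ultimately show ?thesis by (simp add: rpair_alpha)
  qed
  then have "v k - fund_coweight n DR c k = 0" for k
    using in_aQR_eq_0[OF in_aQR_diff] v fund by blast
  then show "v = fund_coweight n DR c" by auto
qed

section \<open>Coroots and the common sign pattern\<close>

text \<open>The only properties of coweights and coroots used below.\<close>

definition sign_split :: "nat \<Rightarrow> nat set \<Rightarrow> nat \<Rightarrow> (nat \<Rightarrow> real) \<Rightarrow> bool" where
  "sign_split n D c u \<longleftrightarrow> in_a n D u \<and> (\<Sum>j = 1..n. u j) = 0 \<and>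
     (\<forall>j \<in> {1..n}. j \<le> c \<longrightarrow> 0 \<le> u j) \<and> (\<forall>j \<in> {1..n}. c < j \<longrightarrow> u j \<le> 0) \<and>
     (\<exists>j \<in> {1..n}. 0 < u j)"

lemma sign_split_coweight:
  assumes "DQ \<subseteq> {1..<n}" and "DR \<subseteq> DQ" and "c \<in> DQ" "c \<notin> DR"
  shows "sign_split n DQ c (coweight n DQ DR c)"
proof -
  have c: "1 \<le> c" "c < n" using assms by auto
  have "finite DR" using assms finite_subset by (metis finite_atLeastLessThan)
  note sign = fund_coweight_sign[OF this c]
  show ?thesis unfolding sign_split_def coweight_eq[OF assms]
  proof (intro conjI)
    show "in_a n DQ (fund_coweight n DR c)" by (rule fund_coweight_in_a[OF assms])
    show "(\<Sum>j = 1..n. fund_coweight n DR c j) = 0" by (rule sum_fund_coweight[OF \<open>finite DR\<close> c])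
    show "\<exists>j \<in> {1..n}. 0 < fund_coweight n DR c j" using sign(3) c by auto
  qed (use sign(1,2) in blast)+
qed

lemma sum_times_block_indicator:
  assumes "in_a n D v" and x: "x \<in> {1..n}"
  shows "(\<Sum>k = 1..n. v k * ((if same_block D k x then 1 else 0) / real (card (block n D k)))) = v x"
proof -
  have "(\<Sum>k = 1..n. v k * ((if same_block D k x then 1 else 0) / real (card (block n D k))))
      = (\<Sum>k = 1..n. if same_block D x k then v x / real (card (block n D x)) else 0)"
  proof (rule sum.cong)
    fix k assume k: "k \<in> {1..n}"
    show "v k * ((if same_block D k x then 1 else 0) / real (card (block n D k))) =
          (if same_block D x k then v x / real (card (block n D x)) else 0)"
    proof (cases "same_block D k x")
      case True
      then have "v k = v x" using assms k unfolding in_a_def by blast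
      then show ?thesis using True block_eq[OF True] by (simp add: same_block_sym)
    qed (simp add: same_block_sym)
  qed simp
  also have "\<dots> = (\<Sum>k \<in> block n D x. v x / real (card (block n D x)))"
    by (simp add: sum.inter_filter[symmetric])
  also have "\<dots> = v x"
  proof -
    have "real (card (block n D x)) \<noteq> 0" using card_block_pos[OF x, of D] by linarith
    then show ?thesis by simp
  qed
  finally show ?thesis .
qed

lemma sum_block_indicator:
  assumes "x \<in> {1..n}"
  shows "(\<Sum>k = 1..n. (if same_block D k x then 1 else 0) / real (card (block n D k))) = 1"
proof -
  have "in_a n D (\<lambda>k. if k \<in> {1..n} then 1 else 0)" unfolding in_a_def by auto
  note sum_times_block_indicator[OF this assms]
  moreover have "(\<Sum>k = 1..n. (if same_block D k x then 1 else 0) / real (card (block n D k)))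
      = (\<Sum>k = 1..n. (if k \<in> {1..n} then 1 else 0) * ((if same_block D k x then 1 else 0) / real (card (block n D k))))"
    by (rule sum.cong) auto
  ultimately show ?thesis using assms by simp
qed

lemma coroot_eq:
  assumes "1 \<le> c" "c < n"
  shows "coroot n D c k = (if k \<in> {1..n}
    then ((if same_block D k c then 1 else 0) - (if same_block D k (Suc c) then 1 else 0)) / real (card (block n D k))
    else 0)"
proof -
  have "(\<Sum>l \<in> block n D k. alpha c l) = (\<Sum>l \<in> block n D k. (if l = c then 1 else 0) - (if l = Suc c then 1 else 0))"
    unfolding alpha_def by (rule sum.cong) auto
  also have "\<dots> = (if same_block D k c then 1 else 0) - (if same_block D k (Suc c) then 1 else 0)"
    using assms by (simp add: sum_subtractf)
  finally show ?thesis unfolding coroot_def proj_def by simp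
qed

lemma sign_split_coroot:
  assumes "DQ \<subseteq> {1..<n}" and "DR \<subseteq> DQ" and c: "c \<in> DR"
  shows "sign_split n DQ c (coroot n DR c)"
proof -
  have c1: "1 \<le> c" "c < n" using assms by auto
  have cn: "c \<in> {1..n}" "Suc c \<in> {1..n}" using c1 by auto
  note coroot = coroot_eq[OF c1, of DR]
  have "in_a n DQ (coroot n DR c)" unfolding in_a_def
  proof (intro conjI allI impI)
    fix k assume "k \<notin> {1..n}"
    then show "coroot n DR c k = 0" by (simp only: coroot[of k] if_not_P if_False)
  next
    fix k l assume k: "k \<in> {1..n}" and l: "l \<in> {1..n}" and "same_block DQ k l"
    then have kl: "same_block DR k l" using same_block_antimono \<open>DR \<subseteq> DQ\<close> by blast
    then have "same_block DR k d \<longleftrightarrow> same_block DR l d" for d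
      using same_block_trans same_block_sym by blast
    then show "coroot n DR c k = coroot n DR c l" using coroot k l block_eq[OF kl] by simp
  qed
  moreover have "(\<Sum>j = 1..n. coroot n DR c j) = 0"
  proof -
    have "(\<Sum>j = 1..n. coroot n DR c j)
        = (\<Sum>j = 1..n. (if same_block DR j c then 1 else 0) / real (card (block n DR j)))
        - (\<Sum>j = 1..n. (if same_block DR j (Suc c) then 1 else 0) / real (card (block n DR j)))"
      unfolding sum_subtractf[symmetric] by (rule sum.cong) (auto simp: coroot diff_divide_distrib)
    then show ?thesis using sum_block_indicator[OF cn(1)] sum_block_indicator[OF cn(2)] by simp
  qed
  moreover have not_right: "\<not> same_block DR k (Suc c)" if "k \<le> c" for k
    using c that unfolding same_block_def by (auto simp: min_def max_def)
  have not_left: "\<not> same_block DR k c" if "c < k" for k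
    using c that unfolding same_block_def by (auto simp: min_def max_def)
  have "\<forall>j \<in> {1..n}. j \<le> c \<longrightarrow> 0 \<le> coroot n DR c j" using coroot not_right by auto
  moreover have "\<forall>j \<in> {1..n}. c < j \<longrightarrow> coroot n DR c j \<le> 0" using coroot not_left by auto
  moreover have "0 < coroot n DR c c" using coroot card_block_pos[OF cn(1), of DR] not_right[of c] cn by simp
  ultimately show ?thesis unfolding sign_split_def using cn(1) by blast
qed

text \<open>\<open>coweight n DR {}\<close> is the basis of \<open>a_R^G\<close> dual to the simple roots of \<open>R\<close>.\<close>

lemma rpair_coweight_coroot:
  assumes "DR \<subseteq> {1..<n}" and c: "c \<in> DR" and d: "d \<in> DR"
  shows "rpair n (coweight n DR {} d) (coroot n DR c) = (if c = d then 1 else 0)"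
proof -
  have c1: "1 \<le> c" "c < n" using assms by auto
  have cn: "c \<in> {1..n}" "Suc c \<in> {1..n}" using c1 by auto
  have eq: "coweight n DR {} d = fund_coweight n {} d" using coweight_eq[OF assms(1) _ d] by simp
  have v: "in_a n DR (fund_coweight n {} d)" using fund_coweight_in_a[OF assms(1) _ d] by simp
  have "rpair n (fund_coweight n {} d) (coroot n DR c) =
      (\<Sum>k = 1..n. fund_coweight n {} d k * ((if same_block DR k c then 1 else 0) / real (card (block n DR k))))
    - (\<Sum>k = 1..n. fund_coweight n {} d k * ((if same_block DR k (Suc c) then 1 else 0) / real (card (block n DR k))))"
    unfolding rpair_def sum_subtractf[symmetric]
    by (rule sum.cong) (auto simp: coroot_eq[OF c1] right_diff_distrib diff_divide_distrib)
  also have "\<dots> = rpair n (alpha c) (fund_coweight n {} d)"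
    using sum_times_block_indicator[OF v cn(1)] sum_times_block_indicator[OF v cn(2)] rpair_alpha c1 by simp
  also have "\<dots> = (if c = d then 1 else 0)" using rpair_alpha_fund_coweight[OF assms(1) _ d _ c] by simp
  finally show ?thesis using eq by simp
qed

section \<open>Gram determinants\<close>

lemma det_padded_gram_matrix:
  fixes f :: "nat \<Rightarrow> nat \<Rightarrow> real"
  assumes S: "S \<subseteq> {..<N}"
  shows "det (Matrix.mat N N (\<lambda>(i, j). if i \<in> S \<and> j \<in> S then rpair n (f i) (f j) else if i = j then 1 else 0))
    = gram_det n S f"
proof -
  define E where "E i j = (if i \<in> S \<and> j \<in> S then rpair n (f i) (f j) else if i = j then (1::real) else 0)" for i j
  define A where "A = Matrix.mat N N (\<lambda>(i, j). E i j)"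
  have A: "A \<in> carrier_mat N N" unfolding A_def by simp
  have term_eq: "signof p * (\<Prod>i = 0..<N. A $$ (i, p i)) =
      (if p permutes S then real_of_int (sign p) * (\<Prod>i \<in> S. rpair n (f i) (f (p i))) else 0)"
    if p: "p permutes {0..<N}" for p
  proof -
    have "(\<Prod>i = 0..<N. A $$ (i, p i)) = (\<Prod>i = 0..<N. E i (p i))"
      using permutes_in_image[OF p] by (intro prod.cong) (auto simp: A_def)
    also have "\<dots> = (if p permutes S then (\<Prod>i \<in> S. rpair n (f i) (f (p i))) else 0)"
    proof (cases "p permutes S")
      case True
      have "(\<Prod>i = 0..<N. E i (p i)) = (\<Prod>i \<in> S. E i (p i))"
        using S True by (intro prod.mono_neutral_right) (auto simp: E_def permutes_not_in)
      also have "\<dots> = (\<Prod>i \<in> S. rpair n (f i) (f (p i)))"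
        using permutes_in_image[OF True] by (intro prod.cong) (auto simp: E_def)
      finally show ?thesis using True by simp
    next
      case False
      then obtain i where i: "i \<notin> S" "p i \<noteq> i"
        using p unfolding permutes_def by blast
      then have "i < N" using p unfolding permutes_def by (metis atLeastLessThan_iff le0)
      moreover have "E i (p i) = 0" using i unfolding E_def by auto
      ultimately have "(\<Prod>i = 0..<N. E i (p i)) = 0" by (intro prod_zero) auto
      then show ?thesis using False by simp
    qed
    finally show ?thesis by simp
  qed
  have "det A = (\<Sum>p \<in> {p. p permutes {0..<N}}. signof p * (\<Prod>i = 0..<N. A $$ (i, p i)))"
    by (rule det_def'[OF A])
  also have "\<dots> = (\<Sum>p \<in> {p. p permutes {0..<N}}. if p \<in> {p. p permutes S}
      then real_of_int (sign p) * (\<Prod>i \<in> S. rpair n (f i) (f (p i))) else 0)"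
    by (rule sum.cong) (auto simp: term_eq)
  also have "\<dots> = (\<Sum>p \<in> {p. p permutes {0..<N}} \<inter> {p. p permutes S}.
      real_of_int (sign p) * (\<Prod>i \<in> S. rpair n (f i) (f (p i))))"
    by (rule sum.inter_restrict[symmetric]) (simp add: finite_permutations)
  also have "{p. p permutes {0..<N}} \<inter> {p. p permutes S} = {p. p permutes S}"
    using S permutes_subset[of _ S "{0..<N}"] by (auto simp: lessThan_atLeast0)
  finally show ?thesis unfolding A_def E_def gram_det_def by simp
qed

lemma sum_square_lincomb:
  fixes x :: "nat \<Rightarrow> real" and f :: "nat \<Rightarrow> nat \<Rightarrow> real"
  shows "(\<Sum>k \<in> K. (\<Sum>i \<in> S. x i * f i k)\<^sup>2) = (\<Sum>i \<in> S. x i * (\<Sum>j \<in> S. (\<Sum>k \<in> K. f i k * f j k) * x j))"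
proof -
  have "(\<Sum>k \<in> K. (\<Sum>i \<in> S. x i * f i k)\<^sup>2) = (\<Sum>k \<in> K. \<Sum>i \<in> S. \<Sum>j \<in> S. x i * (f i k * f j k * x j))"
    by (simp add: power2_eq_square sum_product mult_ac)
  also have "\<dots> = (\<Sum>i \<in> S. \<Sum>j \<in> S. \<Sum>k \<in> K. x i * (f i k * f j k * x j))"
    by (subst sum.swap) (simp add: sum.swap[of _ K])
  also have "\<dots> = (\<Sum>i \<in> S. x i * (\<Sum>j \<in> S. (\<Sum>k \<in> K. f i k * f j k) * x j))"
    by (simp add: sum_distrib_left sum_distrib_right)
  finally show ?thesis .
qed

lemma gram_det_eq_0_imp_kernel:
  fixes f :: "nat \<Rightarrow> nat \<Rightarrow> real"
  assumes "finite S" and "gram_det n S f = 0"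
  obtains x where "\<exists>d \<in> S. x d \<noteq> 0" and "\<And>i. i \<in> S \<Longrightarrow> (\<Sum>j \<in> S. rpair n (f i) (f j) * x j) = 0"
proof -
  obtain N where S: "S \<subseteq> {..<N}" using finite_nat_bounded[OF \<open>finite S\<close>] by blast
  define A where "A = Matrix.mat N N (\<lambda>(i, j). if i \<in> S \<and> j \<in> S then rpair n (f i) (f j) else if i = j then (1::real) else 0)"
  have A: "A \<in> carrier_mat N N" unfolding A_def by simp
  have "det A = 0" using det_padded_gram_matrix[OF S, of n f] assms(2) unfolding A_def by simp
  then obtain v where v: "v \<in> carrier_vec N" "v \<noteq> 0\<^sub>v N" "A *\<^sub>v v = 0\<^sub>v N"
    using det_0_iff_vec_prod_zero_field[OF A] by blast
  define x where "x i = v $ i" for i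
  have row: "(\<Sum>j \<in> {0..<N}. A $$ (i, j) * x j) = 0" if i: "i < N" for i
  proof -
    have "0 = (A *\<^sub>v v) $ i" using v(3) i by simp
    also have "\<dots> = Matrix.row A i \<bullet> v" using i A by simp
    also have "\<dots> = (\<Sum>j \<in> {0..<N}. A $$ (i, j) * x j)"
      using i v(1) A unfolding Matrix.scalar_prod_def x_def by (intro sum.cong) auto
    finally show ?thesis by simp
  qed
  have outside: "x i = 0" if i: "i < N" "i \<notin> S" for i
  proof -
    have "(\<Sum>j \<in> {0..<N}. A $$ (i, j) * x j) = (\<Sum>j \<in> {0..<N}. if j = i then x i else 0)"
      using i by (intro sum.cong) (auto simp: A_def)
    then show ?thesis using row[OF i(1)] i(1) by simp
  qed
  have "\<exists>d \<in> S. x d \<noteq> 0"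
  proof (rule ccontr)
    assume "\<not> (\<exists>d \<in> S. x d \<noteq> 0)"
    then have "v = 0\<^sub>v N" using outside v(1) unfolding x_def by (intro eq_vecI) auto
    then show False using v(2) by simp
  qed
  moreover have "(\<Sum>j \<in> S. rpair n (f i) (f j) * x j) = 0" if i: "i \<in> S" for i
  proof -
    have "(\<Sum>j \<in> {0..<N}. A $$ (i, j) * x j) = (\<Sum>j \<in> {0..<N}. if j \<in> S then rpair n (f i) (f j) * x j else 0)"
      using i S by (intro sum.cong) (auto simp: A_def)
    also have "\<dots> = (\<Sum>j \<in> S. rpair n (f i) (f j) * x j)"
      using S by (simp add: sum.inter_restrict[symmetric] Int_absorb1 lessThan_atLeast0)
    finally show ?thesis using row i S by auto
  qed
  ultimately show ?thesis using that by blast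
qed

text \<open>A kernel vector \<open>x\<close> of the Gram matrix gives \<open>\<Sum>i. x i * f i = 0\<close>, and pairing with
  \<open>g d\<close> gives \<open>x d = 0\<close>.\<close>

lemma gram_det_nonzero_if_dual:
  fixes f g :: "nat \<Rightarrow> nat \<Rightarrow> real"
  assumes "finite S"
    and dual: "\<And>c d. c \<in> S \<Longrightarrow> d \<in> S \<Longrightarrow> rpair n (g d) (f c) = (if c = d then 1 else 0)"
  shows "gram_det n S f \<noteq> 0"
proof
  assume "gram_det n S f = 0"
  then obtain x where nonzero: "\<exists>d \<in> S. x d \<noteq> 0"
    and kernel: "\<And>i. i \<in> S \<Longrightarrow> (\<Sum>j \<in> S. rpair n (f i) (f j) * x j) = 0"
    using gram_det_eq_0_imp_kernel[OF \<open>finite S\<close>] by blast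
  define y where "y k = (\<Sum>i \<in> S. x i * f i k)" for k
  have "(\<Sum>k \<in> {1..n}. (y k)\<^sup>2) = (\<Sum>i \<in> S. x i * (\<Sum>j \<in> S. rpair n (f i) (f j) * x j))"
    unfolding y_def rpair_def by (rule sum_square_lincomb)
  also have "\<dots> = 0" using kernel by simp
  finally have y0: "y k = 0" if "k \<in> {1..n}" for k
    using sum_nonneg_eq_0_iff[of "{1..n}" "\<lambda>k. (y k)\<^sup>2"] that by simp
  have "x d = 0" if d: "d \<in> S" for d
  proof -
    have "x d = (\<Sum>i \<in> S. x i * (if i = d then 1 else 0))" using d \<open>finite S\<close> by (simp add: if_distrib cong: if_cong)
    also have "\<dots> = (\<Sum>i \<in> S. x i * rpair n (g d) (f i))" using dual d by simp
    also have "\<dots> = (\<Sum>k \<in> {1..n}. g d k * y k)"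
      unfolding rpair_def y_def by (simp add: sum_distrib_left mult_ac sum.swap[of _ S])
    also have "\<dots> = 0" using y0 by simp
    finally show ?thesis .
  qed
  then show False using nonzero by blast
qed

lemma covol_nonzero_if_dual:
  assumes "finite S" and "\<And>c d. c \<in> S \<Longrightarrow> d \<in> S \<Longrightarrow> rpair n (g d) (f c) = (if c = d then 1 else 0)"
  shows "covol n S f \<noteq> 0"
  using gram_det_nonzero_if_dual[OF assms] unfolding covol_def by simp

section \<open>Negativity of the real part\<close>

definition prefix_sum :: "nat \<Rightarrow> nat set \<Rightarrow> (nat \<Rightarrow> real) \<Rightarrow> nat \<Rightarrow> nat \<Rightarrow> real" where
  "prefix_sum n D f m t = (\<Sum>a = 1..n. if a < m \<and> same_block D a t then f a else 0)"

lemma prefix_sum_nonneg: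
  assumes block_sum: "(\<Sum>a = 1..n. if same_block D a t then f a else 0) = 0"
    and sign_change: "\<And>a b. a \<in> {1..n} \<Longrightarrow> b \<in> {1..n} \<Longrightarrow> a < b \<Longrightarrow> same_block D a t \<Longrightarrow> same_block D b t
      \<Longrightarrow> f a < 0 \<Longrightarrow> f b \<le> 0"
  shows "0 \<le> prefix_sum n D f m t"
proof (cases "\<exists>a \<in> {1..n}. a < m \<and> same_block D a t \<and> f a < 0")
  case True
  then obtain a0 where a0: "a0 \<in> {1..n}" "a0 < m" "same_block D a0 t" "f a0 < 0" by blast
  have "(\<Sum>a = 1..n. if \<not> a < m \<and> same_block D a t then f a else 0) \<le> 0"
    using sign_change[OF a0(1) _ _ a0(3) _ a0(4)] a0(2) by (intro sum_nonpos) auto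
  moreover have "prefix_sum n D f m t + (\<Sum>a = 1..n. if \<not> a < m \<and> same_block D a t then f a else 0) = 0"
    unfolding prefix_sum_def sum.distrib[symmetric] using block_sum by (smt (verit) sum.cong)
  ultimately show ?thesis by linarith
next
  case False
  then show ?thesis unfolding prefix_sum_def by (intro sum_nonneg) auto
qed

lemma prefix_sum_pos:
  assumes a0: "a0 \<in> {1..n}" "0 < f a0"
    and sign_change: "\<And>a. a \<in> {1..n} \<Longrightarrow> a < a0 \<Longrightarrow> same_block D a a0 \<Longrightarrow> f a < 0 \<Longrightarrow> f a0 \<le> 0"
  shows "0 < prefix_sum n D f (Suc a0) a0"
proof -
  have "0 \<le> (if a < Suc a0 \<and> same_block D a a0 then f a else 0)" if a: "a \<in> {1..n}" for a
  proof (cases "a < Suc a0 \<and> same_block D a a0")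
    case True
    have "\<not> f a < 0" if "a \<noteq> a0" using sign_change[OF a] True that a0(2) by fastforce
    then show ?thesis using True a0(2) by (cases "a = a0") auto
  qed auto
  then have "(if a0 < Suc a0 \<and> same_block D a0 a0 then f a0 else 0) \<le> prefix_sum n D f (Suc a0) a0"
    unfolding prefix_sum_def using a0(1) by (intro member_le_sum) auto
  then show ?thesis using a0(2) by simp
qed

lemma sum_rho_eq_sum_pairs:
  fixes f cc :: "nat \<Rightarrow> real"
  assumes f_const: "\<And>a b. a \<in> {1..n} \<Longrightarrow> b \<in> {1..n} \<Longrightarrow> a < b \<Longrightarrow> same_block DP a b \<Longrightarrow> same_block DS a b
      \<Longrightarrow> f a = f b"
    and cc_const: "\<And>a b. a \<in> {1..n} \<Longrightarrow> b \<in> {1..n} \<Longrightarrow> same_block DP a b \<Longrightarrow> cc a = cc b"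
  shows "(\<Sum>k = 1..n. 2 * rho n DP DS k * (cc k * f k))
    = (\<Sum>k = 1..n. \<Sum>b = 1..n. if k < b \<and> same_block DP k b then cc k * f k - cc k * f b else 0)"
proof -
  define I where "I = {1..n}"
  define R where "R k b \<longleftrightarrow> k < b \<and> same_block DP k b \<and> \<not> same_block DS k b" for k b
  define g where "g k = cc k * f k" for k
  have card_times: "real (card {b \<in> I. P b}) * z = (\<Sum>b \<in> I. if P b then z else 0)" for P and z :: real
    unfolding I_def by (simp add: sum.inter_filter[symmetric])
  have rho: "2 * rho n DP DS k = real (card {b \<in> I. R k b}) - real (card {a \<in> I. R a k})" for k
    unfolding rho_def R_def I_def by simp
  have "(\<Sum>k \<in> I. 2 * rho n DP DS k * g k)
      = (\<Sum>k \<in> I. \<Sum>b \<in> I. if R k b then g k else 0) - (\<Sum>k \<in> I. \<Sum>a \<in> I. if R a k then g k else 0)"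
    unfolding rho left_diff_distrib sum_subtractf card_times ..
  also have "(\<Sum>k \<in> I. \<Sum>a \<in> I. if R a k then g k else 0) = (\<Sum>k \<in> I. \<Sum>b \<in> I. if R k b then g b else 0)"
    by (rule sum.swap)
  also have "(\<Sum>k \<in> I. \<Sum>b \<in> I. if R k b then g k else 0) - (\<Sum>k \<in> I. \<Sum>b \<in> I. if R k b then g b else 0)
      = (\<Sum>k \<in> I. \<Sum>b \<in> I. if k < b \<and> same_block DP k b then cc k * f k - cc k * f b else 0)"
    \<comment> \<open>pairs in the same block of \<open>DS\<close> contribute nothing\<close>
    unfolding sum_subtractf[symmetric]
  proof (intro sum.cong refl)
    fix k b assume "k \<in> I" "b \<in> I"
    then show "(if R k b then g k else 0) - (if R k b then g b else 0)
        = (if k < b \<and> same_block DP k b then cc k * f k - cc k * f b else 0)"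
      using f_const[of k b] cc_const[of k b] unfolding R_def g_def I_def by auto
  qed
  finally show ?thesis unfolding I_def g_def .
qed

lemma sum_pairs_eq_prefix_sums:
  fixes f cc :: "nat \<Rightarrow> real"
  assumes cc_const: "\<And>a b. a \<in> {1..n} \<Longrightarrow> b \<in> {1..n} \<Longrightarrow> same_block DP a b \<Longrightarrow> cc a = cc b"
    and block_sum: "\<And>t. t \<in> {1..n} \<Longrightarrow> (\<Sum>a = 1..n. if same_block DP a t then f a else 0) = 0"
  shows "(\<Sum>k = 1..n. \<Sum>b = 1..n. if k < b \<and> same_block DP k b then cc k * f k - cc k * f b else 0)
    = (\<Sum>k = 1..n. cc k * (prefix_sum n DP f k k + prefix_sum n DP f (Suc k) k))"
proof -
  define I where "I = {1..n}"
  define R where "R k b \<longleftrightarrow> k < b \<and> same_block DP k b" for k b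
  have "(\<Sum>k \<in> I. \<Sum>b \<in> I. if R k b then cc k * f k else 0) = (\<Sum>b \<in> I. \<Sum>k \<in> I. if R k b then cc k * f k else 0)"
    by (rule sum.swap)
  also have "\<dots> = (\<Sum>b \<in> I. cc b * prefix_sum n DP f b b)"
    unfolding prefix_sum_def sum_distrib_left I_def
  proof (intro sum.cong refl)
    fix b k assume "b \<in> {1..n}" "k \<in> {1..n}"
    then show "(if R k b then cc k * f k else 0) = cc b * (if k < b \<and> same_block DP k b then f k else 0)"
      using cc_const[of k b] by (auto simp: R_def)
  qed
  finally have first: "(\<Sum>k \<in> I. \<Sum>b \<in> I. if R k b then cc k * f k else 0) = \<dots>" .
  have second: "(\<Sum>b \<in> I. if R k b then cc k * f b else 0) = cc k * (- prefix_sum n DP f (Suc k) k)"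
    if k: "k \<in> I" for k
  proof -
    have "(\<Sum>b \<in> I. if same_block DP b k then f b else 0)
        = (\<Sum>b \<in> I. if R k b then f b else 0) + prefix_sum n DP f (Suc k) k"
      unfolding prefix_sum_def I_def[symmetric] sum.distrib[symmetric]
      by (intro sum.cong refl) (auto simp: R_def same_block_sym)
    then have "(\<Sum>b \<in> I. if R k b then f b else 0) = - prefix_sum n DP f (Suc k) k"
      using block_sum k unfolding I_def by simp
    moreover have "(\<Sum>b \<in> I. if R k b then cc k * f b else 0) = cc k * (\<Sum>b \<in> I. if R k b then f b else 0)"
      unfolding sum_distrib_left by (rule sum.cong) auto
    ultimately show ?thesis by simp
  qed
  have "(\<Sum>k \<in> I. \<Sum>b \<in> I. if R k b then cc k * f k - cc k * f b else 0)
      = (\<Sum>k \<in> I. \<Sum>b \<in> I. if R k b then cc k * f k else 0) - (\<Sum>k \<in> I. \<Sum>b \<in> I. if R k b then cc k * f b else 0)"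
    unfolding sum_subtractf[symmetric] by (intro sum.cong refl) auto
  also have "(\<Sum>k \<in> I. \<Sum>b \<in> I. if R k b then cc k * f b else 0) = (\<Sum>k \<in> I. cc k * (- prefix_sum n DP f (Suc k) k))"
    using second by (rule sum.cong[OF refl])
  also note first
  also have "(\<Sum>b \<in> I. cc b * prefix_sum n DP f b b) - (\<Sum>k \<in> I. cc k * (- prefix_sum n DP f (Suc k) k))
      = (\<Sum>k \<in> I. cc k * (prefix_sum n DP f k k + prefix_sum n DP f (Suc k) k))"
    by (simp add: sum_subtractf[symmetric] algebra_simps)
  finally show ?thesis unfolding I_def R_def .
qed

lemma sum_rho_pos:
  fixes f cc :: "nat \<Rightarrow> real"
  assumes f_const: "\<And>a b. a \<in> {1..n} \<Longrightarrow> b \<in> {1..n} \<Longrightarrow> a < b \<Longrightarrow> same_block DP a b \<Longrightarrow> same_block DS a b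
      \<Longrightarrow> f a = f b"
    and cc_const: "\<And>a b. a \<in> {1..n} \<Longrightarrow> b \<in> {1..n} \<Longrightarrow> same_block DP a b \<Longrightarrow> cc a = cc b"
    and block_sum: "\<And>t. t \<in> {1..n} \<Longrightarrow> (\<Sum>a = 1..n. if same_block DP a t then f a else 0) = 0"
    and cc_pos: "\<And>a. a \<in> {1..n} \<Longrightarrow> 0 < cc a"
    and sign_change: "\<And>a b. a \<in> {1..n} \<Longrightarrow> b \<in> {1..n} \<Longrightarrow> a < b \<Longrightarrow> same_block DP a b \<Longrightarrow> f a < 0 \<Longrightarrow> f b \<le> 0"
    and a0: "a0 \<in> {1..n}" "0 < f a0"
  shows "0 < (\<Sum>k = 1..n. rho n DP DS k * (cc k * f k))"
proof -
  have nonneg: "0 \<le> prefix_sum n DP f m t" if t: "t \<in> {1..n}" for m t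
  proof (rule prefix_sum_nonneg[OF block_sum[OF t]])
    fix a b assume "a \<in> {1..n}" "b \<in> {1..n}" "a < b" "same_block DP a t" "same_block DP b t" "f a < 0"
    then show "f b \<le> 0" using sign_change same_block_trans same_block_sym by metis
  qed
  have "0 < prefix_sum n DP f (Suc a0) a0"
    using a0 sign_change[of _ a0] by (intro prefix_sum_pos) auto
  then have "0 < cc a0 * (prefix_sum n DP f a0 a0 + prefix_sum n DP f (Suc a0) a0)"
    using cc_pos[OF a0(1)] nonneg[OF a0(1)] by (simp add: add_nonneg_pos)
  also have "\<dots> \<le> (\<Sum>k = 1..n. cc k * (prefix_sum n DP f k k + prefix_sum n DP f (Suc k) k))"
    using a0(1) by (intro member_le_sum) (auto intro!: mult_nonneg_nonneg add_nonneg_nonneg nonneg less_imp_le[OF cc_pos])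
  also have "\<dots> = 2 * (\<Sum>k = 1..n. rho n DP DS k * (cc k * f k))"
    using sum_rho_eq_sum_pairs[OF f_const cc_const] sum_pairs_eq_prefix_sums[OF cc_const block_sum]
    by (simp add: sum_distrib_left mult.assoc)
  finally show ?thesis by simp
qed

lemma sum_inv_permutes:
  assumes "w permutes I"
  shows "(\<Sum>j \<in> I. h (inv_into UNIV w j) j) = (\<Sum>k \<in> I. h k (w k))"
  using sum.permute[OF assms, of "\<lambda>j. h (inv_into UNIV w j) j"] permutes_inverses(2)[OF assms] by simp

lemma sum_nu_neg:
  assumes w: "inQWP n DQ DP w"
    and rc_pos: "\<And>a. a \<in> {1..n} \<Longrightarrow> 0 < rc a"
    and rc_const: "\<And>a b. a \<in> {1..n} \<Longrightarrow> b \<in> {1..n} \<Longrightarrow> same_block DP a b \<Longrightarrow> rc a = rc b"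
    and u: "sign_split n DQ c u"
    and block_sum: "\<And>t. t \<in> {1..n} \<Longrightarrow> (\<Sum>a = 1..n. if same_block DP a t then u (w a) else 0) = 0"
  shows "(\<Sum>k = 1..n. nu n rc DP (Pw_cuts n DP DQ w) k * u (w k)) < 0"
proof -
  have perm: "w permutes {1..n}"
    and mono: "\<And>i j. 1 \<le> i \<Longrightarrow> i < j \<Longrightarrow> j \<le> n \<Longrightarrow> same_block DP i j \<Longrightarrow> w i < w j"
    using w unfolding inQWP_def by blast+
  have w_in: "w a \<in> {1..n}" if "a \<in> {1..n}" for a using permutes_in_image[OF perm] that by simp
  have u_in_a: "in_a n DQ u" and u_left: "\<forall>j \<in> {1..n}. j \<le> c \<longrightarrow> 0 \<le> u j"
    and u_right: "\<forall>j \<in> {1..n}. c < j \<longrightarrow> u j \<le> 0" and u_pos: "\<exists>j \<in> {1..n}. 0 < u j"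
    using u unfolding sign_split_def by blast+
  define DS where "DS = Pw_cuts n DP DQ w"
  have f_const: "u (w a) = u (w b)"
    if ab: "a \<in> {1..n}" "b \<in> {1..n}" "a < b" "same_block DP a b" "same_block DS a b" for a b
  proof (rule same_block_step_const[OF ab(5)])
    fix i assume i: "a \<le> i" "i < b" "i \<notin> DS"
    then have "same_block DQ (w i) (w (Suc i))" using ab unfolding DS_def Pw_cuts_def by auto
    moreover have "w i \<in> {1..n}" "w (Suc i) \<in> {1..n}" using i ab w_in by auto
    ultimately show "u (w i) = u (w (Suc i))" using u_in_a unfolding in_a_def by blast
  qed (use ab in simp)
  have sign_change: "u (w b) \<le> 0"
    if "a \<in> {1..n}" "b \<in> {1..n}" "a < b" "same_block DP a b" "u (w a) < 0" for a b
  proof -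
    have "c < w a"
    proof (rule ccontr)
      assume "\<not> c < w a"
      then have "0 \<le> u (w a)" using u_left w_in[OF that(1)] by simp
      then show False using that(5) by simp
    qed
    then have "c < w b" using mono[of a b] that by simp
    then show ?thesis using u_right w_in[OF that(2)] by simp
  qed
  have cc_const: "1 / real (rc a) = 1 / real (rc b)"
    if "a \<in> {1..n}" "b \<in> {1..n}" "same_block DP a b" for a b
    using rc_const[OF that] by simp
  have cc_pos: "0 < 1 / real (rc a)" if "a \<in> {1..n}" for a using rc_pos[OF that] by simp
  obtain j where j: "j \<in> {1..n}" "0 < u j" using u_pos by blast
  then have a0: "inv_into UNIV w j \<in> {1..n}" "0 < u (w (inv_into UNIV w j))"
    using permutes_in_image[OF permutes_inv[OF perm]] permutes_inverses(1)[OF perm] by auto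
  have "0 < (\<Sum>k = 1..n. rho n DP DS k * (1 / real (rc k) * u (w k)))"
    by (rule sum_rho_pos[OF f_const cc_const block_sum cc_pos sign_change a0])
  moreover have "(\<Sum>k = 1..n. nu n rc DP DS k * u (w k)) = - (\<Sum>k = 1..n. rho n DP DS k * (1 / real (rc k) * u (w k)))"
    unfolding sum_negf[symmetric] by (intro sum.cong) (auto simp: nu_def)
  ultimately show ?thesis unfolding DS_def by linarith
qed

text \<open>The test vector is the indicator of a block of \<open>P\<close> minus its mean, an element of
  \<open>a_P^G\<close>.\<close>

lemma block_sums_zero_if_orthogonal:
  assumes perm: "w permutes {1..n}" and u_sum: "(\<Sum>j = 1..n. u j) = 0"
    and orth: "\<And>x. in_aG n DP x \<Longrightarrow> (\<Sum>j = 1..n. x (inv_into UNIV w j) * u j) = 0"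
    and t: "t \<in> {1..n}"
  shows "(\<Sum>a = 1..n. if same_block DP a t then u (w a) else 0) = 0"
proof -
  define m where "m = real (card (block n DP t)) / real n"
  define x where "x k = (if k \<in> {1..n} then (if same_block DP k t then 1 else 0) - m else 0)" for k
  have "in_aG n DP x" unfolding in_aG_def in_a_def
  proof (intro conjI allI impI)
    fix k assume "k \<notin> {1..n}"
    then show "x k = 0" by (simp only: x_def if_not_P if_False)
  next
    fix k l assume kl: "k \<in> {1..n}" "l \<in> {1..n}" "same_block DP k l"
    then have "same_block DP k t \<longleftrightarrow> same_block DP l t" using same_block_trans same_block_sym by blast
    then show "x k = x l" unfolding x_def using kl by simp
  next
    have "(\<Sum>l = 1..n. x l) = (\<Sum>l = 1..n. (if same_block DP t l then 1 else 0) - m)"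
      unfolding x_def by (intro sum.cong) (auto simp: same_block_sym)
    also have "\<dots> = 0" using t by (simp add: sum_subtractf sum.inter_filter[symmetric] m_def)
    finally show "(\<Sum>l = 1..n. x l) = 0" .
  qed
  then have "0 = (\<Sum>k = 1..n. x k * u (w k))"
    using orth sum_inv_permutes[OF perm, of "\<lambda>k j. x k * u j"] by simp
  also have "\<dots> = (\<Sum>k = 1..n. (if same_block DP k t then u (w k) else 0) - m * u (w k))"
    unfolding x_def by (intro sum.cong) (auto simp: algebra_simps)
  also have "\<dots> = (\<Sum>k = 1..n. if same_block DP k t then u (w k) else 0)"
    using sum.permute[OF perm, of u] u_sum by (simp add: sum_subtractf sum_distrib_left[symmetric])
  finally show ?thesis by simp
qed

lemma sum_act_nu_neg:
  assumes w: "inQWP n DQ DP w" and w': "inQWP n DQ DP w'"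
    and rc_pos: "\<And>a. a \<in> {1..n} \<Longrightarrow> 0 < rc a"
    and rc_const: "\<And>a b. a \<in> {1..n} \<Longrightarrow> b \<in> {1..n} \<Longrightarrow> same_block DP a b \<Longrightarrow> rc a = rc b"
    and u: "sign_split n DQ c u"
    and orth: "\<forall>y. in_aG n DP y \<longrightarrow> (\<Sum>j = 1..n. y (inv_into UNIV w j) * u j) = 0"
    and orth': "\<forall>y. in_aG n DP y \<longrightarrow> (\<Sum>j = 1..n. y (inv_into UNIV w' j) * u j) = 0"
  shows "(\<Sum>j = 1..n. (act w (nu n rc DP (Pw_cuts n DP DQ w)) j + act w' (nu n rc DP (Pw_cuts n DP DQ w')) j) * u j) < 0"
proof -
  define \<nu> \<nu>' where "\<nu> = nu n rc DP (Pw_cuts n DP DQ w)" and "\<nu>' = nu n rc DP (Pw_cuts n DP DQ w')"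
  have u_sum: "(\<Sum>j = 1..n. u j) = 0" using u unfolding sign_split_def by blast
  have perm: "w permutes {1..n}" "w' permutes {1..n}" using w w' unfolding inQWP_def by blast+
  have "(\<Sum>a = 1..n. if same_block DP a t then u (w a) else 0) = 0"
    "(\<Sum>a = 1..n. if same_block DP a t then u (w' a) else 0) = 0" if "t \<in> {1..n}" for t
    using block_sums_zero_if_orthogonal[OF perm(1) u_sum _ that] block_sums_zero_if_orthogonal[OF perm(2) u_sum _ that]
      orth orth' by simp_all
  then have "(\<Sum>k = 1..n. \<nu> k * u (w k)) < 0" "(\<Sum>k = 1..n. \<nu>' k * u (w' k)) < 0"
    unfolding \<nu>_def \<nu>'_def using sum_nu_neg[OF w rc_pos rc_const u] sum_nu_neg[OF w' rc_pos rc_const u] by auto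
  moreover have "(\<Sum>j = 1..n. (act w \<nu> j + act w' \<nu>' j) * u j)
      = (\<Sum>k = 1..n. \<nu> k * u (w k)) + (\<Sum>k = 1..n. \<nu>' k * u (w' k))"
    using sum_inv_permutes[OF perm(1), of "\<lambda>k j. \<nu> k * u j"] sum_inv_permutes[OF perm(2), of "\<lambda>k j. \<nu>' k * u j"]
    by (simp add: act_def algebra_simps sum.distrib)
  ultimately show ?thesis unfolding \<nu>_def \<nu>'_def by linarith
qed

section \<open>Generic imaginary parts\<close>

text \<open>Induction on \<open>I\<close>: if \<open>p\<close> is a root of the new form only, move along \<open>C p q s\<close> for \<open>s\<close>
  outside the finitely many values where one of the forms vanishes.\<close>

lemma ex_common_non_root:
  fixes g :: "'i \<Rightarrow> 'a \<Rightarrow> real"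
  assumes "finite I" and "p0 \<in> V"
    and closed: "\<And>p q s. p \<in> V \<Longrightarrow> q \<in> V \<Longrightarrow> C p q s \<in> V"
    and affine: "\<And>i p q s. i \<in> I \<Longrightarrow> p \<in> V \<Longrightarrow> q \<in> V \<Longrightarrow> g i (C p q s) = g i p + s * g i q"
    and nonzero: "\<And>i. i \<in> I \<Longrightarrow> \<exists>q \<in> V. g i q \<noteq> 0"
  shows "\<exists>p \<in> V. \<forall>i \<in> I. g i p \<noteq> 0"
  using assms(1) affine nonzero
proof (induction I rule: finite_induct)
  case empty
  then show ?case using \<open>p0 \<in> V\<close> by blast
next
  case (insert i I)
  then obtain p where p: "p \<in> V" "\<forall>j \<in> I. g j p \<noteq> 0" by blast
  show ?case
  proof (cases "g i p = 0")
    case False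
    then show ?thesis using p by blast
  next
    case True
    obtain q where q: "q \<in> V" "g i q \<noteq> 0" using insert.prems(2) by blast
    have "finite (insert 0 ((\<lambda>j. - g j p / g j q) ` I))" using insert.hyps(1) by simp
    then obtain s :: real where s: "s \<notin> insert 0 ((\<lambda>j. - g j p / g j q) ` I)"
      using ex_new_if_finite[OF infinite_UNIV_char_0] by blast
    have "g j (C p q s) \<noteq> 0" if j: "j \<in> insert i I" for j
    proof -
      have eq: "g j (C p q s) = g j p + s * g j q" using insert.prems(1)[OF j p(1) q(1)] .
      show ?thesis
      proof (cases "j = i")
        case True
        then show ?thesis using eq \<open>g i p = 0\<close> q s by auto
      next
        case False
        then have "j \<in> I" using j by simp
        show ?thesis
        proof
          assume "g j (C p q s) = 0"
          then have sum0: "g j p + s * g j q = 0" using eq by simp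
          then have "g j q \<noteq> 0" using p(2) \<open>j \<in> I\<close> by auto
          then have "s = - g j p / g j q" using sum0 by (simp add: field_simps)
          then show False using s \<open>j \<in> I\<close> by auto
        qed
      qed
    qed
    then show ?thesis using closed[OF p(1) q(1)] by blast
  qed
qed

lemma cpair_ne_0:
  assumes "(\<Sum>j = 1..n. B j * u j) \<noteq> 0 \<or> (\<Sum>j = 1..n. A j * u j) \<noteq> 0"
  shows "cpair n (\<lambda>j. \<i> * complex_of_real (A j) + complex_of_real (B j)) u \<noteq> 0"
proof -
  have "Re (cpair n (\<lambda>j. \<i> * complex_of_real (A j) + complex_of_real (B j)) u) = (\<Sum>j = 1..n. B j * u j)"
    "Im (cpair n (\<lambda>j. \<i> * complex_of_real (A j) + complex_of_real (B j)) u) = (\<Sum>j = 1..n. A j * u j)"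
    unfolding cpair_def by (simp_all add: Re_sum Im_sum)
  then show ?thesis using assms by auto
qed

lemma in_aG_lincomb: "in_aG n D x \<Longrightarrow> in_aG n D y \<Longrightarrow> in_aG n D (\<lambda>k. x k + s * y k)"
  unfolding in_aG_def using in_a_lincomb by (simp add: sum.distrib sum_distrib_left[symmetric])

lemma in_aG_zero: "in_aG n D (\<lambda>_. 0)"
  unfolding in_aG_def in_a_def by simp

lemma theta_hat_ne_0:
  assumes "DQ \<subseteq> {1..<n}" and "DR \<subseteq> DQ"
    and "\<And>c. c \<in> DQ - DR \<Longrightarrow> cpair n \<mu> (coweight n DQ DR c) \<noteq> 0"
  shows "theta_hat n DQ DR \<mu> \<noteq> 0"
proof -
  have "finite (DQ - DR)" using assms(1) finite_subset by blast
  moreover have "covol n (DQ - DR) (coweight n DQ DR) \<noteq> 0"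
  proof (rule covol_nonzero_if_dual[where g = alpha])
    fix c d assume "c \<in> DQ - DR" "d \<in> DQ - DR"
    then show "rpair n (alpha d) (coweight n DQ DR c) = (if c = d then 1 else 0)"
      using coweight_eq[OF assms(1,2)] rpair_alpha_fund_coweight[OF assms(1,2)] by auto
  qed fact
  ultimately show ?thesis unfolding theta_hat_def using assms(3) by simp
qed

lemma theta_ne_0:
  assumes "DR \<subseteq> {1..<n}" and "\<And>c. c \<in> DR \<Longrightarrow> cpair n \<mu> (coroot n DR c) \<noteq> 0"
  shows "theta n DR \<mu> \<noteq> 0"
proof -
  have "finite DR" using assms(1) finite_subset by blast
  moreover have "covol n DR (coroot n DR) \<noteq> 0"
    using rpair_coweight_coroot[OF assms(1)] by (rule covol_nonzero_if_dual[OF \<open>finite DR\<close>])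
  ultimately show ?thesis unfolding theta_def using assms(2) by simp
qed

definition mu :: "nat \<Rightarrow> (nat \<Rightarrow> nat) \<Rightarrow> nat set \<Rightarrow> nat set \<Rightarrow> (nat \<Rightarrow> nat) \<Rightarrow> (nat \<Rightarrow> nat)
    \<Rightarrow> (nat \<Rightarrow> complex) \<Rightarrow> (nat \<Rightarrow> complex) \<Rightarrow> nat \<Rightarrow> complex" where
  "mu n rc DP DQ w w' lam lam' = (\<lambda>j. act w lam j + act w' lam' j
     + complex_of_real (act w (nu n rc DP (Pw_cuts n DP DQ w)) j)
     + complex_of_real (act w' (nu n rc DP (Pw_cuts n DP DQ w')) j))"

lemma ex_generic_imaginary_parts:
  assumes "finite U"
  obtains x x' where "in_aG n DP x" "in_aG n DP x'"
    and "\<And>u. u \<in> U \<Longrightarrow> (\<Sum>j = 1..n. (x (inv_into UNIV w j) + x' (inv_into UNIV w' j)) * u j) \<noteq> 0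
      \<or> (\<forall>y. in_aG n DP y \<longrightarrow> (\<Sum>j = 1..n. y (inv_into UNIV w j) * u j) = 0)
        \<and> (\<forall>y. in_aG n DP y \<longrightarrow> (\<Sum>j = 1..n. y (inv_into UNIV w' j) * u j) = 0)"
proof -
  define V where "V = {(x, x'). in_aG n DP x \<and> in_aG n DP x'}"
  define im where "im u p = (\<Sum>j = 1..n. (fst p (inv_into UNIV w j) + snd p (inv_into UNIV w' j)) * u j)"
    for u :: "nat \<Rightarrow> real" and p :: "(nat \<Rightarrow> real) \<times> (nat \<Rightarrow> real)"
  define U0 where "U0 = {u \<in> U. \<exists>q \<in> V. im u q \<noteq> 0}"
  have "\<exists>p \<in> V. \<forall>u \<in> U0. im u p \<noteq> 0"
  proof (rule ex_common_non_root[where C = "\<lambda>p q s. (\<lambda>k. fst p k + s * fst q k, \<lambda>k. snd p k + s * snd q k)"])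
    show "finite U0" using \<open>finite U\<close> unfolding U0_def by simp
    show "(\<lambda>_. 0, \<lambda>_. 0) \<in> V" unfolding V_def using in_aG_zero by simp
    show "(\<lambda>k. fst p k + s * fst q k, \<lambda>k. snd p k + s * snd q k) \<in> V" if "p \<in> V" "q \<in> V" for p q s
      using that in_aG_lincomb unfolding V_def by auto
    show "im u (\<lambda>k. fst p k + s * fst q k, \<lambda>k. snd p k + s * snd q k) = im u p + s * im u q" for u p q s
      unfolding im_def by (simp add: algebra_simps sum.distrib sum_distrib_left)
    show "\<exists>q \<in> V. im u q \<noteq> 0" if "u \<in> U0" for u using that unfolding U0_def by blast
  qed
  then obtain x x' where x: "in_aG n DP x" "in_aG n DP x'" and generic: "\<forall>u \<in> U0. im u (x, x') \<noteq> 0"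
    unfolding V_def by auto
  moreover have "im u (x, x') \<noteq> 0 \<or> (\<forall>y. in_aG n DP y \<longrightarrow> (\<Sum>j = 1..n. y (inv_into UNIV w j) * u j) = 0)
      \<and> (\<forall>y. in_aG n DP y \<longrightarrow> (\<Sum>j = 1..n. y (inv_into UNIV w' j) * u j) = 0)" if u: "u \<in> U" for u
  proof (cases "u \<in> U0")
    case True
    then show ?thesis using generic by blast
  next
    case False
    then have im0: "im u q = 0" if "q \<in> V" for q using u that unfolding U0_def by blast
    have "(\<Sum>j = 1..n. y (inv_into UNIV w j) * u j) = 0" "(\<Sum>j = 1..n. y (inv_into UNIV w' j) * u j) = 0"
      if "in_aG n DP y" for y
      using im0[of "(y, \<lambda>_. 0)"] im0[of "(\<lambda>_. 0, y)"] that in_aG_zero[of n DP] unfolding V_def im_def by simp_all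
    then show ?thesis by blast
  qed
  ultimately show ?thesis using that unfolding im_def by simp
qed

lemma ex_pairings_ne_0:
  assumes "finite U"
    and U: "\<And>u. u \<in> U \<Longrightarrow> \<exists>c. sign_split n DQ c u"
    and w: "inQWP n DQ DP w" and w': "inQWP n DQ DP w'"
    and rc_pos: "\<And>a. a \<in> {1..n} \<Longrightarrow> 0 < rc a"
    and rc_const: "\<And>a b. a \<in> {1..n} \<Longrightarrow> b \<in> {1..n} \<Longrightarrow> same_block DP a b \<Longrightarrow> rc a = rc b"
  shows "\<exists>lam lam'. in_iaG n DP lam \<and> in_iaG n DP lam' \<and>
    (\<forall>u \<in> U. cpair n (mu n rc DP DQ w w' lam lam') u \<noteq> 0)"
proof -
  obtain x x' where x: "in_aG n DP x" "in_aG n DP x'"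
    and generic: "\<And>u. u \<in> U \<Longrightarrow> (\<Sum>j = 1..n. (x (inv_into UNIV w j) + x' (inv_into UNIV w' j)) * u j) \<noteq> 0
      \<or> (\<forall>y. in_aG n DP y \<longrightarrow> (\<Sum>j = 1..n. y (inv_into UNIV w j) * u j) = 0)
        \<and> (\<forall>y. in_aG n DP y \<longrightarrow> (\<Sum>j = 1..n. y (inv_into UNIV w' j) * u j) = 0)"
    using ex_generic_imaginary_parts[OF \<open>finite U\<close>] by blast
  define \<nu> \<nu>' where "\<nu> = nu n rc DP (Pw_cuts n DP DQ w)" and "\<nu>' = nu n rc DP (Pw_cuts n DP DQ w')"
  have "cpair n (\<lambda>j. \<i> * complex_of_real (x (inv_into UNIV w j) + x' (inv_into UNIV w' j))
      + complex_of_real (act w \<nu> j + act w' \<nu>' j)) u \<noteq> 0" if u: "u \<in> U" for u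
  proof (rule cpair_ne_0)
    obtain c where u_split: "sign_split n DQ c u" using U[OF u] by blast
    from generic[OF u] show "(\<Sum>j = 1..n. (act w \<nu> j + act w' \<nu>' j) * u j) \<noteq> 0
      \<or> (\<Sum>j = 1..n. (x (inv_into UNIV w j) + x' (inv_into UNIV w' j)) * u j) \<noteq> 0"
    proof
      assume "(\<forall>y. in_aG n DP y \<longrightarrow> (\<Sum>j = 1..n. y (inv_into UNIV w j) * u j) = 0)
        \<and> (\<forall>y. in_aG n DP y \<longrightarrow> (\<Sum>j = 1..n. y (inv_into UNIV w' j) * u j) = 0)"
      then have "(\<Sum>j = 1..n. (act w \<nu> j + act w' \<nu>' j) * u j) < 0"
        unfolding \<nu>_def \<nu>'_def using sum_act_nu_neg[where rc = rc, OF w w' rc_pos rc_const u_split] by blast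
      then show ?thesis by simp
    qed simp
  qed
  moreover have "mu n rc DP DQ w w' (\<lambda>j. \<i> * complex_of_real (x j)) (\<lambda>j. \<i> * complex_of_real (x' j))
      = (\<lambda>j. \<i> * complex_of_real (x (inv_into UNIV w j) + x' (inv_into UNIV w' j))
        + complex_of_real (act w \<nu> j + act w' \<nu>' j))"
    unfolding mu_def act_def \<nu>_def \<nu>'_def by (simp add: fun_eq_iff distrib_left add.assoc)
  moreover have "in_iaG n DP (\<lambda>j. \<i> * complex_of_real (x j))" "in_iaG n DP (\<lambda>j. \<i> * complex_of_real (x' j))"
    unfolding in_iaG_def using x by blast+
  ultimately show ?thesis
    by (intro exI[where x = "\<lambda>j. \<i> * complex_of_real (x j)"] exI[where x = "\<lambda>j. \<i> * complex_of_real (x' j)"])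
      auto
qed

theorem mainTheorem10:
  fixes rd :: "(nat \<times> nat) list" and DQ DR :: "nat set" and w w' :: "nat \<Rightarrow> nat"
    and n :: nat and DP Dpi :: "nat set" and rc :: "nat \<Rightarrow> nat"
  defines "n \<equiv> sum_list (compP rd)"
    and "DP \<equiv> cuts_of (compP rd)"
    and "Dpi \<equiv> cuts_of (compPpi rd)"
    and "rc \<equiv> rcoord rd"
  assumes "rd \<noteq> []"
    and "\<forall>(r, d) \<in> set rd. 0 < r \<and> 0 < d"
    and "DQ \<subseteq> {1..<n}" and "DR \<subseteq> DQ"
    and "inQWP n DQ DP w" and "inQWP n DQ DP w'"
    and "Pw_cuts n DP DQ w \<union> Pw_cuts n DP DQ w' \<subseteq> Dpi"
  shows "\<exists>lam lam'. in_iaG n DP lam \<and> in_iaG n DP lam' \<and>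
    (let \<mu> = (\<lambda>j. act w lam j + act w' lam' j
                 + complex_of_real (act w (nu n rc DP (Pw_cuts n DP DQ w)) j)
                 + complex_of_real (act w' (nu n rc DP (Pw_cuts n DP DQ w')) j))
     in theta_hat n DQ DR \<mu> * theta n DR \<mu> \<noteq> 0)"
proof -
  have DR: "DR \<subseteq> {1..<n}" using assms(7,8) by blast
  have rc_pos: "0 < rc a" if "a \<in> {1..n}" for a
    using rcoord_pos[OF assms(6)] that unfolding rc_def n_def by blast
  have rc_const: "rc a = rc b" if "a \<in> {1..n}" "b \<in> {1..n}" "same_block DP a b" for a b
    using rcoord_eq_if_same_block[OF assms(6)] that unfolding rc_def n_def DP_def by blast
  let ?U = "coweight n DQ DR ` (DQ - DR) \<union> coroot n DR ` DR"
  have "finite DQ" using assms(7) finite_subset by blast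
  then have "finite ?U" using finite_subset[OF assms(8)] by simp
  moreover have "\<exists>c. sign_split n DQ c u" if "u \<in> ?U" for u
    using that sign_split_coweight[OF assms(7,8)] sign_split_coroot[OF assms(7,8)] by blast
  ultimately have "\<exists>lam lam'. in_iaG n DP lam \<and> in_iaG n DP lam' \<and>
      (\<forall>u \<in> ?U. cpair n (mu n rc DP DQ w w' lam lam') u \<noteq> 0)"
    by (rule ex_pairings_ne_0[OF _ _ assms(9,10) rc_pos rc_const])
  then obtain lam lam' where "in_iaG n DP lam" "in_iaG n DP lam'"
    and pairings: "\<forall>u \<in> ?U. cpair n (mu n rc DP DQ w w' lam lam') u \<noteq> 0"
    by blast
  moreover have "theta_hat n DQ DR (mu n rc DP DQ w w' lam lam') \<noteq> 0"
    using pairings by (intro theta_hat_ne_0[OF assms(7,8)]) auto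
  moreover have "theta n DR (mu n rc DP DQ w w' lam lam') \<noteq> 0"
    using pairings by (intro theta_ne_0[OF DR]) auto
  ultimately show ?thesis unfolding Let_def mu_def[symmetric] by (intro exI[of _ lam] exI[of _ lam']) simp
qed

end
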